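(* Let $m$ be a natural number with $m>3$. If there exists a natural number $n$ such that the $n$-th term $G(n,m)$ of the Goodstein sequence $G(m)$ is $0$, then there is some $k<n$ such that $G(k,m)<G(k-1,m)$.
   Context: For a natural number base $b>1$, the hereditary representation $m\langle b\rangle$ of $m$ is $\sum_{i=0}^{l} a_i b^{i}$ with $0\le a_i<b$, $a_l\ne0$, each exponent itself written in hereditary representation in base $b$, recursively. $m\langle b\rangle''$ is obtained by syntactically replacing every $b$ by $b+1$ in $m\langle b\rangle$. The Goodstein sequence $G(m)=\{m, m''-1, (m''-1)''-1,\dots\}$ starts from $m$ in base $2$; its $n$-th term is $G(n,m)$, with $G(1,m)=m$ in base $2$, $G(k,m)$ written in base $k+1$, and $G(k+1,m)=G(k,m)\langle k+1\rangle''-1$. *)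

theory Defs
  imports Main
begin

text \<open>Hereditary base change: write n in hereditary base b and replace every b by c.
  Digit i of n in base b is (n div b^i) mod b; exponents i are themselves
  converted recursively (only i < n can carry a nonzero digit).\<close>
function hbump :: "nat \<Rightarrow> nat \<Rightarrow> nat \<Rightarrow> nat" where
  "hbump b c n = (\<Sum>i<n. ((n div b ^ i) mod b) * c ^ (hbump b c i))"
  by pat_completeness auto
termination
  by (relation "measure (\<lambda>(b, c, n). n)") auto

declare hbump.simps[simp del]

text \<open>Goodstein sequence, 1-indexed: goodstein 1 m = m,
  goodstein (k+1) m = (goodstein k m)<k+1>'' - 1.  Index 0 is a dummy set to m.\<close>
fun goodstein :: "nat \<Rightarrow> nat \<Rightarrow> nat" where
  "goodstein 0 m = m"
| "goodstein (Suc 0) m = m"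
| "goodstein (Suc (Suc k)) m = hbump (Suc (Suc k)) (Suc (Suc (Suc k))) (goodstein (Suc k) m) - 1"

end

theory Submission
  imports Defs
begin

text \<open>Bumping the hereditary base never decreases a number: compared with the ordinary
  base-b expansion, every power b^i is replaced by the larger c^(bump i).  Hence one
  Goodstein step lowers the value by at most one.  If the sequence never strictly
  decreased before step n, all terms up to n-1 would stay at least m, so the n-th term
  would be at least m-1 > 0.\<close>

lemma sum_digits_eq_mod_power:
  fixes b n :: nat
  shows "(\<Sum>i<k. ((n div b ^ i) mod b) * b ^ i) = n mod b ^ k"
proof (induction k)
  case 0
  then show ?case by simp
next
  case (Suc k)
  have "n mod b ^ Suc k = n mod b ^ k + b ^ k * (n div b ^ k mod b)"
    unfolding power_Suc2 mod_mult2_eq by simp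
  then show ?case using Suc by (simp add: mult.commute)
qed

lemma le_hbump:
  fixes b c :: nat
  assumes "b \<ge> 2" "c \<ge> b"
  shows "n \<le> hbump b c n"
proof (induction n rule: less_induct)
  case (less n)
  have "n < b ^ n"
    using assms(1) less_exp[of n] power_mono[of 2 b n] by linarith
  then have "n = (\<Sum>i<n. ((n div b ^ i) mod b) * b ^ i)"
    by (simp add: sum_digits_eq_mod_power)
  also have "\<dots> \<le> (\<Sum>i<n. ((n div b ^ i) mod b) * c ^ (hbump b c i))"
  proof (intro sum_mono mult_left_mono)
    fix i assume "i \<in> {..<n}"
    then have "i \<le> hbump b c i" using less by simp
    then have "c ^ i \<le> c ^ hbump b c i"
      using assms by (intro power_increasing) auto
    then show "b ^ i \<le> c ^ hbump b c i"
      using assms power_mono[of b c i] by linarith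
  qed simp
  also have "\<dots> = hbump b c n" by (simp add: hbump.simps[of b c n])
  finally show ?case .
qed

lemma goodstein_Suc_ge:
  "goodstein k m - 1 \<le> goodstein (Suc k) m"
proof (cases k)
  case (Suc j)
  have "goodstein k m \<le> hbump (Suc k) (Suc (Suc k)) (goodstein k m)"
    by (rule le_hbump) (auto simp: Suc)
  then show ?thesis by (simp add: Suc)
qed simp

lemma goodstein_ge_start_if_no_descent:
  assumes "1 \<le> j"
    and "\<And>k. 2 \<le> k \<Longrightarrow> k \<le> j \<Longrightarrow> goodstein (k - 1) m \<le> goodstein k m"
  shows "m \<le> goodstein j m"
  using assms
proof (induction j rule: dec_induct)
  case base
  then show ?case by simp
next
  case (step k)
  then show ?case
    using step.prems[of "Suc k"] by (simp add: step.hyps)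
qed

theorem lemma1:
  fixes m n :: nat
  assumes "m > 3"
    and "goodstein n m = 0"
  shows "\<exists>k. 2 \<le> k \<and> k < n \<and> goodstein k m < goodstein (k - 1) m"
proof (rule ccontr)
  assume no_descent: "\<not> ?thesis"
  obtain j where n: "n = Suc (Suc j)"
    using assms by (cases n; cases "n - 1") auto
  have "m \<le> goodstein (Suc j) m"
    using no_descent by (intro goodstein_ge_start_if_no_descent) (auto simp: n not_less)
  then have "m - 1 \<le> goodstein n m"
    using goodstein_Suc_ge[of "Suc j" m] by (simp add: n)
  then show False using assms by simp
qed

end
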